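(* Let $E,A,B\in\mathbb{C}^{n,n}$ pairwise commute. Then there exists a nonsingular $U\in\mathbb{C}^{n,n}$ such that $$UEU^{-1}=\mathrm{diag}(J^E,N^E_2,N^E_3,N^E_4),\quad UAU^{-1}=\mathrm{diag}(A_1,J^A,N^A_3,N^A_4),\quad UBU^{-1}=\mathrm{diag}(B_1,B_2,J^B,N^B_4),$$ with conformable square diagonal blocks, where $J^E,J^A,J^B$ are nonsingular and $N^E_2,N^E_3,N^E_4,N^A_3,N^A_4,N^B_4$ are nilpotent. Moreover, if the triple $(E,A,B)$ is regular (i.e. $\det(\lambda E-A-\omega B)$ is not identically zero), then the fourth diagonal blocks are absent (have size zero).
   Context: Blocks of size zero are allowed. *)

theory Defs
  imports "Jordan_Normal_Form.Determinant"
begin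

definition nilpotent_mat :: "'a :: semiring_1 mat \<Rightarrow> bool" where
  "nilpotent_mat N \<longleftrightarrow> square_mat N \<and> (\<exists>k. N ^\<^sub>m k = 0\<^sub>m (dim_row N) (dim_col N))"

definition block_diag2 :: "'a :: zero mat \<Rightarrow> 'a mat \<Rightarrow> 'a mat" where
  "block_diag2 X Y = four_block_mat X (0\<^sub>m (dim_row X) (dim_col Y)) (0\<^sub>m (dim_row Y) (dim_col X)) Y"

definition block_diag4 :: "'a :: zero mat \<Rightarrow> 'a mat \<Rightarrow> 'a mat \<Rightarrow> 'a mat \<Rightarrow> 'a mat" where
  "block_diag4 X1 X2 X3 X4 = block_diag2 X1 (block_diag2 X2 (block_diag2 X3 X4))"

definition regular_triple :: "complex mat \<Rightarrow> complex mat \<Rightarrow> complex mat \<Rightarrow> bool" where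
  "regular_triple E A B \<longleftrightarrow> (\<exists>l w. det (l \<cdot>\<^sub>m E - A - w \<cdot>\<^sub>m B) \<noteq> 0)"

end

theory Submission
  imports Defs "Jordan_Normal_Form.Jordan_Normal_Form_Existence"
begin

text \<open>Bring a matrix \<open>M\<close> into Fitting form \<open>diag(J, N)\<close> with \<open>J\<close> nonsingular and \<open>N\<close>
  nilpotent, by grouping its Jordan blocks according to whether their eigenvalue vanishes. Every
  matrix commuting with \<open>diag(J, N)\<close> is then block diagonal as well, because a Sylvester equation
  \<open>J X = X N\<close> has only the trivial solution. Splitting along \<open>E\<close>, then the trailing block along
  \<open>A\<close>, and finally the remaining trailing block along \<open>B\<close> produces the four blocks. On the last
  block \<open>E\<close>, \<open>A\<close> and \<open>B\<close> are commuting nilpotent matrices, so they share a null vector and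
  every member \<open>\<lambda>E - A - \<omega>B\<close> of the pencil is singular there; for a regular triple that block
  must therefore be empty.\<close>

section \<open>Block diagonal matrices\<close>

lemma four_block_mat_inject:
  assumes "A \<in> carrier_mat r1 c1" "B \<in> carrier_mat r1 c2" "C \<in> carrier_mat r2 c1" "D \<in> carrier_mat r2 c2"
    and "A' \<in> carrier_mat r1 c1" "B' \<in> carrier_mat r1 c2" "C' \<in> carrier_mat r2 c1" "D' \<in> carrier_mat r2 c2"
  shows "four_block_mat A B C D = four_block_mat A' B' C' D' \<longleftrightarrow> A = A' \<and> B = B' \<and> C = C' \<and> D = D'"
proof
  assume eq: "four_block_mat A B C D = four_block_mat A' B' C' D'"
  have ix: "four_block_mat A B C D $$ (i, j) = four_block_mat A' B' C' D' $$ (i, j)" for i j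
    using eq by simp
  show "A = A' \<and> B = B' \<and> C = C' \<and> D = D'"
  proof (intro conjI eq_matI)
    show "A $$ (i, j) = A' $$ (i, j)" if "i < dim_row A'" "j < dim_col A'" for i j
      using ix[of i j] assms that by auto
    show "B $$ (i, j) = B' $$ (i, j)" if "i < dim_row B'" "j < dim_col B'" for i j
      using ix[of i "j + c1"] assms that by auto
    show "C $$ (i, j) = C' $$ (i, j)" if "i < dim_row C'" "j < dim_col C'" for i j
      using ix[of "i + r1" j] assms that by auto
    show "D $$ (i, j) = D' $$ (i, j)" if "i < dim_row D'" "j < dim_col D'" for i j
      using ix[of "i + r1" "j + c1"] assms that by auto
  qed (use assms in auto)
qed simp

lemma block_diag2_carrier_mat [simp]:
  "X \<in> carrier_mat a a \<Longrightarrow> Y \<in> carrier_mat b b \<Longrightarrow> block_diag2 X Y \<in> carrier_mat (a + b) (a + b)"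
  unfolding block_diag2_def by auto

lemma block_diag2_four_block_mat:
  "X \<in> carrier_mat a a \<Longrightarrow> Y \<in> carrier_mat b b \<Longrightarrow>
    block_diag2 X Y = four_block_mat X (0\<^sub>m a b) (0\<^sub>m b a) Y"
  unfolding block_diag2_def by auto

lemma block_diag2_inject:
  assumes "X \<in> carrier_mat a a" "X' \<in> carrier_mat a a" "Y \<in> carrier_mat b b" "Y' \<in> carrier_mat b b"
  shows "block_diag2 X Y = block_diag2 X' Y' \<longleftrightarrow> X = X' \<and> Y = Y'"
  using assms by (simp add: block_diag2_four_block_mat four_block_mat_inject[of _ a a _ b _ b])

lemma block_diag2_mult:
  assumes "X \<in> carrier_mat a a" "X' \<in> carrier_mat a a" "Y \<in> carrier_mat b b" "Y' \<in> carrier_mat b b"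
  shows "block_diag2 X Y * block_diag2 X' Y' = block_diag2 (X * X') (Y * Y' :: 'a :: semiring_1 mat)"
  unfolding block_diag2_def using assms by (subst mult_four_block_mat) auto

lemma block_diag2_zero: "block_diag2 (0\<^sub>m a a) (0\<^sub>m b b) = (0\<^sub>m (a + b) (a + b) :: 'a :: semiring_1 mat)"
  unfolding block_diag2_def by (rule eq_matI) auto

lemma block_diag2_pow:
  "X \<in> carrier_mat a a \<Longrightarrow> Y \<in> carrier_mat b b \<Longrightarrow>
    block_diag2 X Y ^\<^sub>m k = block_diag2 (X ^\<^sub>m k) (Y ^\<^sub>m k :: 'a :: semiring_1 mat)"
  by (simp add: block_diag2_four_block_mat[of X a Y b] block_diag2_four_block_mat[of "X ^\<^sub>m k" a "Y ^\<^sub>m k" b]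
      pow_four_block_mat)

lemma block_diag2_assoc: "block_diag2 X (block_diag2 Y Z) = block_diag2 (block_diag2 X Y) Z"
  unfolding block_diag2_def by (rule assoc_four_block_mat)

lemma det_block_diag2:
  "X \<in> carrier_mat a a \<Longrightarrow> Y \<in> carrier_mat b b \<Longrightarrow> det (block_diag2 X Y) = det X * det (Y :: 'a :: idom mat)"
  unfolding block_diag2_def by (rule det_four_block_mat_lower_left_zero) auto

lemma commute_block_diag2_iff:
  assumes "X \<in> carrier_mat a a" "X' \<in> carrier_mat a a" "Y \<in> carrier_mat b b" "Y' \<in> carrier_mat b b"
  shows "block_diag2 X Y * block_diag2 X' Y' = block_diag2 X' Y' * block_diag2 X Y \<longleftrightarrow>
    X * X' = X' * X \<and> Y * Y' = Y' * (Y :: 'a :: semiring_1 mat)"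
  using assms by (simp add: block_diag2_mult block_diag2_inject[of _ a _ _ b])

lemma similar_mat_wit_block_diag2:
  assumes "similar_mat_wit X X' P Q" "similar_mat_wit Y Y' R S"
    and "X \<in> carrier_mat a a" "Y \<in> carrier_mat b b"
  shows "similar_mat_wit (block_diag2 X Y) (block_diag2 X' Y') (block_diag2 P R) (block_diag2 Q S)"
proof -
  note X = similar_mat_witD2[OF assms(3,1)] and Y = similar_mat_witD2[OF assms(4,2)]
  have "0\<^sub>m a b = P * 0\<^sub>m a b * S" "0\<^sub>m b a = R * 0\<^sub>m b a * Q"
    using X Y by auto
  from similar_mat_wit_four_block[OF assms(1,2) this assms(3,4) zero_carrier_mat zero_carrier_mat]
  show ?thesis
    unfolding block_diag2_four_block_mat[OF assms(3,4)] block_diag2_four_block_mat[OF X(5) Y(5)]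
      block_diag2_four_block_mat[OF X(6) Y(6)] block_diag2_four_block_mat[OF X(7) Y(7)] .
qed

lemma similar_mat_wit_block_diag2_swap:
  fixes X Y :: "'a :: comm_ring_1 mat"
  assumes X: "X \<in> carrier_mat a a" and Y: "Y \<in> carrier_mat b b"
  shows "similar_mat_wit (block_diag2 X Y) (block_diag2 Y X)
    (four_block_mat (0\<^sub>m a b) (1\<^sub>m a) (1\<^sub>m b) (0\<^sub>m b a))
    (four_block_mat (0\<^sub>m b a) (1\<^sub>m b) (1\<^sub>m a) (0\<^sub>m a b))"
proof -
  have swap_inverse: "four_block_mat (0\<^sub>m c d) (1\<^sub>m c) (1\<^sub>m d) (0\<^sub>m d c) *
      four_block_mat (0\<^sub>m d c) (1\<^sub>m d) (1\<^sub>m c) (0\<^sub>m c d) = (1\<^sub>m (c + d) :: 'a mat)" for c d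
    by (subst mult_four_block_mat) auto
  have "four_block_mat (0\<^sub>m a b) (1\<^sub>m a) (1\<^sub>m b) (0\<^sub>m b a) * block_diag2 Y X =
      four_block_mat (0\<^sub>m a b) X Y (0\<^sub>m b a)"
    using X Y by (simp add: block_diag2_four_block_mat[OF Y X]
      mult_four_block_mat[OF zero_carrier_mat one_carrier_mat one_carrier_mat zero_carrier_mat Y
        zero_carrier_mat zero_carrier_mat X])
  moreover have "four_block_mat (0\<^sub>m a b) X Y (0\<^sub>m b a) *
      four_block_mat (0\<^sub>m b a) (1\<^sub>m b) (1\<^sub>m a) (0\<^sub>m a b) = block_diag2 X Y"
    using X Y by (simp add: block_diag2_four_block_mat[OF X Y]
      mult_four_block_mat[OF zero_carrier_mat X Y zero_carrier_mat zero_carrier_mat one_carrier_mat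
        one_carrier_mat zero_carrier_mat])
  ultimately have "block_diag2 X Y = four_block_mat (0\<^sub>m a b) (1\<^sub>m a) (1\<^sub>m b) (0\<^sub>m b a) *
      block_diag2 Y X * four_block_mat (0\<^sub>m b a) (1\<^sub>m b) (1\<^sub>m a) (0\<^sub>m a b)"
    by simp
  then show ?thesis
    using swap_inverse[of a b] swap_inverse[of b a] X Y block_diag2_carrier_mat[OF Y X]
    by (intro similar_mat_witI[of _ _ "a + b"]) (auto simp: add.commute)
qed

section \<open>Nilpotent and nonsingular blocks\<close>

lemma nilpotent_mat_iff:
  "N \<in> carrier_mat n n \<Longrightarrow> nilpotent_mat N \<longleftrightarrow> (\<exists>k. N ^\<^sub>m k = 0\<^sub>m n n)"
  unfolding nilpotent_mat_def by auto

lemma pow_mat_add_eq_zero: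
  assumes "N \<in> carrier_mat n n" "N ^\<^sub>m k = 0\<^sub>m n n"
  shows "N ^\<^sub>m (k + j) = (0\<^sub>m n n :: 'a :: semiring_1 mat)"
  by (induct j) (use assms in auto)

lemma nilpotent_block_diag2_iff:
  assumes X: "X \<in> carrier_mat a a" and Y: "Y \<in> carrier_mat b b"
  shows "nilpotent_mat (block_diag2 X Y) \<longleftrightarrow> nilpotent_mat X \<and> nilpotent_mat (Y :: 'a :: semiring_1 mat)"
proof -
  have "block_diag2 X Y ^\<^sub>m k = 0\<^sub>m (a + b) (a + b) \<longleftrightarrow> X ^\<^sub>m k = 0\<^sub>m a a \<and> Y ^\<^sub>m k = 0\<^sub>m b b" for k
    unfolding block_diag2_pow[OF X Y] block_diag2_zero[symmetric]
    using X Y by (simp add: block_diag2_inject[of _ a _ _ b])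
  moreover have "(\<exists>k. X ^\<^sub>m k = 0\<^sub>m a a) \<and> (\<exists>k. Y ^\<^sub>m k = 0\<^sub>m b b) \<longleftrightarrow>
      (\<exists>k. X ^\<^sub>m k = 0\<^sub>m a a \<and> Y ^\<^sub>m k = 0\<^sub>m b b)"
    using pow_mat_add_eq_zero[OF X] pow_mat_add_eq_zero[OF Y] by (metis add.commute)
  ultimately show ?thesis
    by (simp add: nilpotent_mat_iff[OF block_diag2_carrier_mat[OF X Y]] nilpotent_mat_iff[OF X]
        nilpotent_mat_iff[OF Y])
qed

lemma similar_mat_wit_nilpotent:
  assumes "similar_mat_wit A B P Q" "nilpotent_mat B"
  shows "nilpotent_mat A"
proof -
  define n where "n = dim_row A"
  note w = similar_mat_witD[OF n_def assms(1)]
  obtain k where "B ^\<^sub>m k = 0\<^sub>m n n"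
    using assms(2) w(5) by (auto simp: nilpotent_mat_iff)
  then have "A ^\<^sub>m k = P * 0\<^sub>m n n * Q"
    using similar_mat_wit_pow_id[OF assms(1)] by simp
  then show ?thesis
    using w(4,6,7) by (auto simp: nilpotent_mat_iff)
qed

lemma similar_mat_wit_block_diag2_nilpotent:
  assumes "similar_mat_wit N (block_diag2 X Y) P Q" "nilpotent_mat N"
    and "X \<in> carrier_mat a a" "Y \<in> carrier_mat b b"
  shows "nilpotent_mat X" "nilpotent_mat (Y :: 'a :: semiring_1 mat)"
  using similar_mat_wit_nilpotent[OF similar_mat_wit_sym[OF assms(1)] assms(2)]
  by (simp_all add: nilpotent_block_diag2_iff[OF assms(3,4)])

lemma pow_mat_intertwine:
  assumes "A \<in> carrier_mat a a" "B \<in> carrier_mat b b" "X \<in> carrier_mat a b" "A * X = X * B"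
  shows "A ^\<^sub>m k * X = X * B ^\<^sub>m (k :: nat)"
proof (induct k)
  case (Suc k)
  have "A ^\<^sub>m Suc k * X = A ^\<^sub>m k * (A * X)"
    using assms by (simp add: assoc_mult_mat[of _ a a _ a _ b])
  also have "\<dots> = (A ^\<^sub>m k * X) * B"
    using assms by (simp add: assoc_mult_mat[OF pow_carrier_mat[OF assms(1)] assms(3,2)])
  also have "\<dots> = X * B ^\<^sub>m Suc k"
    using assms Suc by (simp add: assoc_mult_mat[of _ a b _ b _ b])
  finally show ?case .
qed (use assms in simp)

lemma det_pow_mat: "A \<in> carrier_mat n n \<Longrightarrow> det (A ^\<^sub>m k) = det A ^ k"
  by (induct k) (simp_all add: det_mult[of _ n])

lemma det_nonzero_inverseE:
  fixes J :: "'a :: field mat"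
  assumes J: "J \<in> carrier_mat n n" and d: "det J \<noteq> 0"
  obtains K where "K \<in> carrier_mat n n" "J * K = 1\<^sub>m n" "K * J = 1\<^sub>m n"
proof
  let ?K = "(1 / det J) \<cdot>\<^sub>m adj_mat J"
  show "?K \<in> carrier_mat n n" using adj_mat(1)[OF J] by simp
  show "J * ?K = 1\<^sub>m n" "?K * J = 1\<^sub>m n"
    unfolding mult_smult_distrib[OF J adj_mat(1)[OF J]] mult_smult_assoc_mat[OF adj_mat(1)[OF J] J]
      adj_mat(2,3)[OF J] using d by auto
qed

lemma invertible_mat_if_det_nonzero:
  "J \<in> carrier_mat n n \<Longrightarrow> det J \<noteq> 0 \<Longrightarrow> invertible_mat (J :: 'a :: field mat)"
  by (rule det_nonzero_inverseE) (auto simp: invertible_mat_def inverts_mat_def)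

lemma det_nonzero_cancel_left:
  fixes J X :: "'a :: field mat"
  assumes J: "J \<in> carrier_mat n n" "det J \<noteq> 0" and X: "X \<in> carrier_mat n m" and JX: "J * X = 0\<^sub>m n m"
  shows "X = 0\<^sub>m n m"
proof -
  obtain K where K: "K \<in> carrier_mat n n" "K * J = 1\<^sub>m n"
    using det_nonzero_inverseE[OF J] by metis
  have "X = (K * J) * X" using K X by simp
  also have "\<dots> = K * (J * X)" by (rule assoc_mult_mat[OF K(1) J(1) X])
  finally show ?thesis using JX K by simp
qed

lemma det_nonzero_cancel_right:
  fixes J X :: "'a :: field mat"
  assumes J: "J \<in> carrier_mat n n" "det J \<noteq> 0" and X: "X \<in> carrier_mat m n" and XJ: "X * J = 0\<^sub>m m n"
  shows "X = 0\<^sub>m m n"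
proof -
  obtain K where K: "K \<in> carrier_mat n n" "J * K = 1\<^sub>m n"
    using det_nonzero_inverseE[OF J] by metis
  have "X = X * (J * K)" using K X by simp
  also have "\<dots> = (X * J) * K" by (rule assoc_mult_mat[OF X J(1) K(1), symmetric])
  finally show ?thesis using XJ K by simp
qed

text \<open>Powers carry the equation over to \<open>J\<^sup>k X = X N\<^sup>k = 0\<close>.\<close>

lemma sylvester_nonsingular_nilpotent:
  fixes J N X Y :: "'a :: field mat"
  assumes J: "J \<in> carrier_mat a a" "det J \<noteq> 0" and N: "N \<in> carrier_mat b b" "nilpotent_mat N"
    and X: "X \<in> carrier_mat a b" and Y: "Y \<in> carrier_mat b a"
  shows "J * X = X * N \<Longrightarrow> X = 0\<^sub>m a b" and "N * Y = Y * J \<Longrightarrow> Y = 0\<^sub>m b a"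
proof -
  obtain k where Nk: "N ^\<^sub>m k = 0\<^sub>m b b" using N by (auto simp: nilpotent_mat_iff)
  have Jk: "J ^\<^sub>m k \<in> carrier_mat a a" "det (J ^\<^sub>m k) \<noteq> 0"
    using J by (auto simp: det_pow_mat)
  show "X = 0\<^sub>m a b" if "J * X = X * N"
    using pow_mat_intertwine[OF J(1) N(1) X that, of k] Nk X
    by (intro det_nonzero_cancel_left[OF Jk X]) simp
  show "Y = 0\<^sub>m b a" if "N * Y = Y * J"
    using pow_mat_intertwine[OF N(1) J(1) Y that, of k] Nk Y
    by (intro det_nonzero_cancel_right[OF Jk Y]) simp
qed

lemma commute_fitting_form_block_diag2E:
  fixes J N Y :: "'a :: field mat"
  assumes J: "J \<in> carrier_mat a a" "det J \<noteq> 0" and N: "N \<in> carrier_mat b b" "nilpotent_mat N"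
    and Y: "Y \<in> carrier_mat (a + b) (a + b)"
    and comm: "block_diag2 J N * Y = Y * block_diag2 J N"
  obtains Y1 Y2 where "Y = block_diag2 Y1 Y2" "Y1 \<in> carrier_mat a a" "Y2 \<in> carrier_mat b b"
proof -
  obtain Y1 Y2 Y3 Y4 where "split_block Y a a = (Y1, Y2, Y3, Y4)"
    by (cases "split_block Y a a")
  note Ys = split_block[OF this carrier_matD[OF Y]]
  have "four_block_mat (J * Y1) (J * Y2) (N * Y3) (N * Y4) = four_block_mat (Y1 * J) (Y2 * N) (Y3 * J) (Y4 * N)"
    using comm J N Ys unfolding block_diag2_four_block_mat[OF J(1) N(1)]
    by (simp add: mult_four_block_mat[OF J(1) _ _ N(1) Ys(1-4)] mult_four_block_mat[OF Ys(1-4) J(1) _ _ N(1)])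
  then have "J * Y2 = Y2 * N" "N * Y3 = Y3 * J"
    using J N Ys by (simp_all add: four_block_mat_inject[of _ a a _ b _ b])
  then have "Y2 = 0\<^sub>m a b" "Y3 = 0\<^sub>m b a"
    using sylvester_nonsingular_nilpotent[OF J N Ys(2,3)] by auto
  then have "Y = block_diag2 Y1 Y4"
    using Ys by (simp add: block_diag2_four_block_mat)
  then show thesis using that Ys by blast
qed

section \<open>Fitting decomposition\<close>

lemma det_jordan_block: "det (jordan_block m a) = (a :: 'a :: comm_ring_1) ^ m"
proof -
  have "upper_triangular (jordan_block m a)" unfolding upper_triangular_def by auto
  moreover have "diag_mat (jordan_block m a) = replicate m a"
    unfolding diag_mat_def by (intro nth_equalityI) auto
  ultimately show ?thesis by (simp add: det_upper_triangular[of _ m])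
qed

lemma nilpotent_jordan_block_zero: "nilpotent_mat (jordan_block m (0 :: 'a :: field))"
  unfolding nilpotent_mat_iff[OF jordan_block_carrier]
  by (intro exI[of _ m] eq_matI) (auto simp: jordan_block_zero_pow)

lemma jordan_matrix_fitting_form:
  fixes n_as :: "(nat \<times> 'a :: field) list"
  shows "\<exists>P Q k1 k2 J N. similar_mat_wit (jordan_matrix n_as) (block_diag2 J N) P Q \<and>
    J \<in> carrier_mat k1 k1 \<and> N \<in> carrier_mat k2 k2 \<and> det J \<noteq> 0 \<and> nilpotent_mat N"
proof (induct n_as)
  case Nil
  have "jordan_matrix [] = block_diag2 (1\<^sub>m 0) (0\<^sub>m 0 0 :: 'a mat)"
    unfolding jordan_matrix_def block_diag2_def by (intro eq_matI) auto
  then have "similar_mat_wit (jordan_matrix []) (block_diag2 (1\<^sub>m 0) (0\<^sub>m 0 0 :: 'a mat)) (1\<^sub>m 0) (1\<^sub>m 0)"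
    using similar_mat_wit_refl[OF block_diag2_carrier_mat[OF one_carrier_mat[of 0] zero_carrier_mat[of 0 0]]]
    by simp
  moreover have "nilpotent_mat (0\<^sub>m 0 0 :: 'a mat)"
    unfolding nilpotent_mat_iff[OF zero_carrier_mat] by (intro exI[of _ 1]) simp
  ultimately show ?case
    by (intro exI conjI) auto
next
  case (Cons na n_as)
  obtain m a where na: "na = (m, a)" by force
  from Cons obtain P Q k1 k2 J N where sim: "similar_mat_wit (jordan_matrix n_as) (block_diag2 J N) P Q"
    and J: "J \<in> carrier_mat k1 k1" "det J \<noteq> 0" and N: "N \<in> carrier_mat k2 k2" "nilpotent_mat N"
    by blast
  define B where "B = jordan_block m a"
  have B: "B \<in> carrier_mat m m" unfolding B_def by simp
  have "jordan_matrix (na # n_as) = block_diag2 B (jordan_matrix n_as)"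
    unfolding na jordan_matrix_Cons B_def by (simp add: block_diag2_def)
  then have sim1: "similar_mat_wit (jordan_matrix (na # n_as)) (block_diag2 (block_diag2 B J) N)
      (block_diag2 (1\<^sub>m m) P) (block_diag2 (1\<^sub>m m) Q)"
    using similar_mat_wit_block_diag2[OF similar_mat_wit_refl[OF B] sim B jordan_matrix_carrier]
    by (simp add: block_diag2_assoc)
  show ?case
  proof (cases "a = 0")
    case False
    have "det (block_diag2 B J) = a ^ m * det J"
      unfolding det_block_diag2[OF B J(1)] by (simp add: B_def det_jordan_block)
    then have "det (block_diag2 B J) \<noteq> 0" using False J by simp
    then show ?thesis using sim1 B J N by (blast intro: block_diag2_carrier_mat)
  next
    case True
    note swap = similar_mat_wit_block_diag2[OF similar_mat_wit_block_diag2_swap[OF B J(1)]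
        similar_mat_wit_refl[OF N(1)] block_diag2_carrier_mat[OF B J(1)] N(1)]
    have "\<exists>P Q. similar_mat_wit (jordan_matrix (na # n_as)) (block_diag2 J (block_diag2 B N)) P Q"
      unfolding block_diag2_assoc using similar_mat_wit_trans[OF sim1 swap] by blast
    moreover have "nilpotent_mat B"
      unfolding B_def True by (rule nilpotent_jordan_block_zero)
    then have "nilpotent_mat (block_diag2 B N)"
      using nilpotent_block_diag2_iff[OF B N(1)] N(2) by blast
    ultimately show ?thesis using B J N by (blast intro: block_diag2_carrier_mat)
  qed
qed

lemma fitting_formE:
  fixes M :: "complex mat"
  assumes M: "M \<in> carrier_mat n n"
  obtains P Q k1 k2 J N where "similar_mat_wit M (block_diag2 J N) P Q"
    "J \<in> carrier_mat k1 k1" "N \<in> carrier_mat k2 k2" "det J \<noteq> 0" "nilpotent_mat N"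
proof -
  obtain as where "char_poly M = (\<Prod>a\<leftarrow>as. [:- a, 1:])"
    using char_poly_factorized[OF M] by auto
  from jordan_nf_exists[OF M this] obtain n_as where "jordan_nf M n_as" ..
  then obtain P0 Q0 where "similar_mat_wit M (jordan_matrix n_as) P0 Q0"
    unfolding jordan_nf_def similar_mat_def by auto
  with jordan_matrix_fitting_form[of n_as] that show thesis
    by (meson similar_mat_wit_trans)
qed

section \<open>Splitting commuting matrices simultaneously\<close>

lemma similar_mat_wit_conjugate:
  assumes "similar_mat_wit M M' P Q" "X \<in> carrier_mat n n" "M \<in> carrier_mat n n"
  shows "similar_mat_wit X (Q * X * P) P Q"
proof -
  note w = similar_mat_witD2[OF assms(3,1)]
  have "P * (Q * X * P) * Q = (P * Q) * X * (P * Q)"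
    using w(6,7) assms(2) by (simp add: assoc_mult_mat[of _ n n _ n _ n])
  also have "\<dots> = X" using w assms(2) by simp
  finally show ?thesis
    using w assms(2) by (intro similar_mat_witI[of _ _ n]) auto
qed

lemma similar_mat_wit_commute:
  assumes "similar_mat_wit A A' P Q" "similar_mat_wit B B' P Q" "A * B = B * A"
  shows "A' * B' = B' * A'"
proof -
  define n where "n = dim_row A"
  note a = similar_mat_witD[OF n_def assms(1)]
  have B: "B \<in> carrier_mat n n"
    using similar_mat_witD[OF refl assms(2)] a(6) unfolding carrier_mat_def by simp
  have A': "A' = Q * A * P" and B': "B' = Q * B * P"
    using similar_mat_witD(3)[OF refl similar_mat_wit_sym[OF assms(1)]]
      similar_mat_witD(3)[OF refl similar_mat_wit_sym[OF assms(2)]] by auto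
  have conj_mult: "(Q * X * P) * (Q * Y * P) = Q * (X * Y) * P"
    if "X \<in> carrier_mat n n" "Y \<in> carrier_mat n n" for X Y
  proof -
    have "(Q * X * P) * (Q * Y * P) = Q * (X * ((P * Q) * (Y * P)))"
      using a(6,7) that by (simp add: assoc_mult_mat[of _ n n _ n _ n])
    also have "\<dots> = Q * (X * Y) * P"
      using a(1,6,7) that by (simp add: assoc_mult_mat[of _ n n _ n _ n])
    finally show ?thesis .
  qed
  show ?thesis
    unfolding A' B' conj_mult[OF a(4) B] conj_mult[OF B a(4)] assms(3) ..
qed

lemma commuting_fitting_splitE:
  fixes M X Y :: "complex mat"
  assumes M: "M \<in> carrier_mat n n" and X: "X \<in> carrier_mat n n" and Y: "Y \<in> carrier_mat n n"
    and MX: "M * X = X * M" and MY: "M * Y = Y * M" and XY: "X * Y = Y * X"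
  obtains P Q k1 k2 J N X1 X2 Y1 Y2 where
    "similar_mat_wit M (block_diag2 J N) P Q" "similar_mat_wit X (block_diag2 X1 X2) P Q"
    "similar_mat_wit Y (block_diag2 Y1 Y2) P Q"
    "J \<in> carrier_mat k1 k1" "X1 \<in> carrier_mat k1 k1" "Y1 \<in> carrier_mat k1 k1"
    "N \<in> carrier_mat k2 k2" "X2 \<in> carrier_mat k2 k2" "Y2 \<in> carrier_mat k2 k2"
    "k1 + k2 = n" "det J \<noteq> 0" "nilpotent_mat N" "N * X2 = X2 * N" "N * Y2 = Y2 * N" "X2 * Y2 = Y2 * X2"
proof -
  obtain P Q k1 k2 J N where simM: "similar_mat_wit M (block_diag2 J N) P Q"
    and J: "J \<in> carrier_mat k1 k1" "det J \<noteq> 0" and N: "N \<in> carrier_mat k2 k2" "nilpotent_mat N"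
    by (rule fitting_formE[OF M])
  have n: "n = k1 + k2"
    using similar_mat_witD2[OF M simM] block_diag2_carrier_mat[OF J(1) N(1)] by auto
  note simX = similar_mat_wit_conjugate[OF simM X M] and simY = similar_mat_wit_conjugate[OF simM Y M]
  have "Q * X * P \<in> carrier_mat (k1 + k2) (k1 + k2)" "Q * Y * P \<in> carrier_mat (k1 + k2) (k1 + k2)"
    using similar_mat_witD2[OF X simX] similar_mat_witD2[OF Y simY] n by auto
  moreover have "block_diag2 J N * (Q * X * P) = Q * X * P * block_diag2 J N"
    "block_diag2 J N * (Q * Y * P) = Q * Y * P * block_diag2 J N"
    using similar_mat_wit_commute[OF simM simX MX] similar_mat_wit_commute[OF simM simY MY] .
  ultimately obtain X1 X2 Y1 Y2 where Xs: "Q * X * P = block_diag2 X1 X2"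
      "X1 \<in> carrier_mat k1 k1" "X2 \<in> carrier_mat k2 k2"
    and Ys: "Q * Y * P = block_diag2 Y1 Y2" "Y1 \<in> carrier_mat k1 k1" "Y2 \<in> carrier_mat k2 k2"
    using commute_fitting_form_block_diag2E[OF J N] by metis
  note simX = simX[unfolded Xs(1)] and simY = simY[unfolded Ys(1)]
  have "N * X2 = X2 * N" "N * Y2 = Y2 * N" "X2 * Y2 = Y2 * X2"
    using similar_mat_wit_commute[OF simM simX MX] similar_mat_wit_commute[OF simM simY MY]
      similar_mat_wit_commute[OF simX simY XY]
    unfolding commute_block_diag2_iff[OF J(1) Xs(2) N(1) Xs(3)] commute_block_diag2_iff[OF J(1) Ys(2) N(1) Ys(3)]
      commute_block_diag2_iff[OF Xs(2) Ys(2) Xs(3) Ys(3)]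
    by auto
  with that[OF simM simX simY] J N Xs Ys n show thesis by blast
qed

lemma similar_mat_wit_block_diag4:
  assumes sim1: "similar_mat_wit X (block_diag2 X1 X') P1 Q1"
    and sim2: "similar_mat_wit X' (block_diag2 X2 X'') P2 Q2"
    and sim3: "similar_mat_wit X'' (block_diag2 X3 X4) P3 Q3"
    and X1: "X1 \<in> carrier_mat n1 n1" and X2: "X2 \<in> carrier_mat n2 n2"
  shows "similar_mat_wit X (block_diag4 X1 X2 X3 X4)
    (P1 * block_diag2 (1\<^sub>m n1) (P2 * block_diag2 (1\<^sub>m n2) P3))
    (block_diag2 (1\<^sub>m n1) (block_diag2 (1\<^sub>m n2) Q3 * Q2) * Q1)"
proof -
  have "X'' \<in> carrier_mat (dim_row X'') (dim_row X'')" "X' \<in> carrier_mat (dim_row X') (dim_row X')"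
    by (rule similar_mat_witD(4)[OF refl sim3], rule similar_mat_witD(4)[OF refl sim2])
  note lift = similar_mat_wit_block_diag2[OF similar_mat_wit_refl[OF X2] sim3 X2 this(1)]
    similar_mat_wit_block_diag2[OF similar_mat_wit_refl[OF X1] _ X1 this(2)]
  show ?thesis
    unfolding block_diag4_def using similar_mat_wit_trans[OF sim1 lift(2)[OF similar_mat_wit_trans[OF sim2 lift(1)]]] .
qed

lemma commuting_triple_four_block_formE:
  fixes E A B :: "complex mat"
  assumes E: "E \<in> carrier_mat n n" and A: "A \<in> carrier_mat n n" and B: "B \<in> carrier_mat n n"
    and EA: "E * A = A * E" and EB: "E * B = B * E" and AB: "A * B = B * A"
  obtains P Q n1 n2 n3 n4 JE NE2 NE3 NE4 A1 JA NA3 NA4 B1 B2 JB NB4 where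
    "similar_mat_wit E (block_diag4 JE NE2 NE3 NE4) P Q"
    "similar_mat_wit A (block_diag4 A1 JA NA3 NA4) P Q"
    "similar_mat_wit B (block_diag4 B1 B2 JB NB4) P Q" "n1 + n2 + n3 + n4 = n"
    "JE \<in> carrier_mat n1 n1" "NE2 \<in> carrier_mat n2 n2" "NE3 \<in> carrier_mat n3 n3" "NE4 \<in> carrier_mat n4 n4"
    "A1 \<in> carrier_mat n1 n1" "JA \<in> carrier_mat n2 n2" "NA3 \<in> carrier_mat n3 n3" "NA4 \<in> carrier_mat n4 n4"
    "B1 \<in> carrier_mat n1 n1" "B2 \<in> carrier_mat n2 n2" "JB \<in> carrier_mat n3 n3" "NB4 \<in> carrier_mat n4 n4"
    "invertible_mat JE" "invertible_mat JA" "invertible_mat JB"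
    "nilpotent_mat NE2" "nilpotent_mat NE3" "nilpotent_mat NE4"
    "nilpotent_mat NA3" "nilpotent_mat NA4" "nilpotent_mat NB4"
    "NE4 * NA4 = NA4 * NE4" "NE4 * NB4 = NB4 * NE4" "NA4 * NB4 = NB4 * NA4"
proof -
  obtain P1 Q1 n1 m1 JE N A1 A' B1 B' where
    sim1: "similar_mat_wit E (block_diag2 JE N) P1 Q1" "similar_mat_wit A (block_diag2 A1 A') P1 Q1"
      "similar_mat_wit B (block_diag2 B1 B') P1 Q1"
    and blocks1: "JE \<in> carrier_mat n1 n1" "A1 \<in> carrier_mat n1 n1" "B1 \<in> carrier_mat n1 n1"
      "N \<in> carrier_mat m1 m1" "A' \<in> carrier_mat m1 m1" "B' \<in> carrier_mat m1 m1"
    and size1: "n1 + m1 = n" and JE: "det JE \<noteq> 0" and N: "nilpotent_mat N"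
    and comm1: "N * A' = A' * N" "N * B' = B' * N" "A' * B' = B' * A'"
    by (rule commuting_fitting_splitE[OF E A B EA EB AB])
  obtain P2 Q2 n2 m2 JA NA NE2 N2 B2 B2' where
    sim2: "similar_mat_wit A' (block_diag2 JA NA) P2 Q2" "similar_mat_wit N (block_diag2 NE2 N2) P2 Q2"
      "similar_mat_wit B' (block_diag2 B2 B2') P2 Q2"
    and blocks2: "JA \<in> carrier_mat n2 n2" "NE2 \<in> carrier_mat n2 n2" "B2 \<in> carrier_mat n2 n2"
      "NA \<in> carrier_mat m2 m2" "N2 \<in> carrier_mat m2 m2" "B2' \<in> carrier_mat m2 m2"
    and size2: "n2 + m2 = m1" and JA: "det JA \<noteq> 0" and NA: "nilpotent_mat NA"
    and comm2: "NA * N2 = N2 * NA" "NA * B2' = B2' * NA" "N2 * B2' = B2' * N2"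
    by (rule commuting_fitting_splitE[OF blocks1(5,4,6) comm1(1)[symmetric] comm1(3,2)])
  note NE2 = similar_mat_wit_block_diag2_nilpotent[OF sim2(2) N blocks2(2,5)]
  obtain P3 Q3 n3 n4 JB NB4 NE3 NE4 NA3 NA4 where
    sim3: "similar_mat_wit B2' (block_diag2 JB NB4) P3 Q3" "similar_mat_wit N2 (block_diag2 NE3 NE4) P3 Q3"
      "similar_mat_wit NA (block_diag2 NA3 NA4) P3 Q3"
    and blocks3: "JB \<in> carrier_mat n3 n3" "NE3 \<in> carrier_mat n3 n3" "NA3 \<in> carrier_mat n3 n3"
      "NB4 \<in> carrier_mat n4 n4" "NE4 \<in> carrier_mat n4 n4" "NA4 \<in> carrier_mat n4 n4"
    and size3: "n3 + n4 = m2" and JB: "det JB \<noteq> 0" and NB4: "nilpotent_mat NB4"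
    and comm3: "NB4 * NE4 = NE4 * NB4" "NB4 * NA4 = NA4 * NB4" "NE4 * NA4 = NA4 * NE4"
    by (rule commuting_fitting_splitE[OF blocks2(6,5,4) comm2(3)[symmetric] comm2(2)[symmetric]
          comm2(1)[symmetric]])
  note NE34 = similar_mat_wit_block_diag2_nilpotent[OF sim3(2) NE2(2) blocks3(2,5)]
    and NA34 = similar_mat_wit_block_diag2_nilpotent[OF sim3(3) NA blocks3(3,6)]
  have sizes: "n1 + n2 + n3 + n4 = n" using size1 size2 size3 by simp
  show thesis
    by (rule that[OF similar_mat_wit_block_diag4[OF sim1(1) sim2(2) sim3(2) blocks1(1) blocks2(2)]
          similar_mat_wit_block_diag4[OF sim1(2) sim2(1) sim3(3) blocks1(2) blocks2(1)]
          similar_mat_wit_block_diag4[OF sim1(3) sim2(3) sim3(1) blocks1(3) blocks2(3)] sizes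
          blocks1(1) blocks2(2) blocks3(2,5) blocks1(2) blocks2(1) blocks3(3,6)
          blocks1(3) blocks2(3) blocks3(1,4) invertible_mat_if_det_nonzero[OF blocks1(1) JE]
          invertible_mat_if_det_nonzero[OF blocks2(1) JA] invertible_mat_if_det_nonzero[OF blocks3(1) JB]
          NE2(1) NE34 NA34 NB4
          comm3(3) comm3(1)[symmetric] comm3(2)[symmetric]])
qed

section \<open>Singular pencils\<close>

definition pencil :: "'a :: comm_ring_1 \<Rightarrow> 'a \<Rightarrow> 'a mat \<Rightarrow> 'a mat \<Rightarrow> 'a mat \<Rightarrow> 'a mat" where
  "pencil l w E A B = l \<cdot>\<^sub>m E - A - w \<cdot>\<^sub>m B"

lemma regular_triple_iff_pencil: "regular_triple E A B \<longleftrightarrow> (\<exists>l w. det (pencil l w E A B) \<noteq> 0)"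
  unfolding regular_triple_def pencil_def ..

lemma pencil_carrier_mat [simp]:
  "E \<in> carrier_mat n n \<Longrightarrow> A \<in> carrier_mat n n \<Longrightarrow> B \<in> carrier_mat n n \<Longrightarrow>
    pencil l w E A B \<in> carrier_mat n n"
  unfolding pencil_def by (simp add: minus_carrier_mat)

lemma pencil_block_diag2:
  assumes "E1 \<in> carrier_mat a a" "A1 \<in> carrier_mat a a" "B1 \<in> carrier_mat a a"
    and "E2 \<in> carrier_mat b b" "A2 \<in> carrier_mat b b" "B2 \<in> carrier_mat b b"
  shows "pencil l w (block_diag2 E1 E2) (block_diag2 A1 A2) (block_diag2 B1 B2) =
    block_diag2 (pencil l w E1 A1 B1) (pencil l w E2 A2 B2)"
  using assms by (intro eq_matI) (auto simp: pencil_def block_diag2_def)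

lemma pencil_mult_mat_vec:
  assumes "E \<in> carrier_mat n n" "A \<in> carrier_mat n n" "B \<in> carrier_mat n n" "v \<in> carrier_vec n"
  shows "pencil l w E A B *\<^sub>v v = l \<cdot>\<^sub>v (E *\<^sub>v v) - A *\<^sub>v v - w \<cdot>\<^sub>v (B *\<^sub>v v)"
  using assms
  by (intro eq_vecI) (auto simp: pencil_def scalar_prod_def sum_subtractf sum_distrib_left algebra_simps)

lemma similar_mat_wit_minus:
  fixes A B :: "'a :: comm_ring_1 mat"
  assumes "similar_mat_wit A A' P Q" "similar_mat_wit B B' P Q"
  shows "similar_mat_wit (A - B) (A' - B') P Q"
proof -
  define n where "n = dim_row A"
  note a = similar_mat_witD[OF n_def assms(1)]
  have B: "B \<in> carrier_mat n n"
    using similar_mat_witD[OF refl assms(2)] a(6) unfolding carrier_mat_def by simp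
  note b = similar_mat_witD2[OF B assms(2)]
  have "P * (A' - B') * Q = P * A' * Q - P * B' * Q"
    using a b by (simp add: mult_minus_distrib_mat[of _ n n] minus_mult_distrib_mat[of _ n n])
  then show ?thesis
    using a b by (intro similar_mat_witI[of _ _ n]) (auto simp: minus_carrier_mat)
qed

lemma similar_mat_wit_pencil:
  assumes "similar_mat_wit E E' P Q" "similar_mat_wit A A' P Q" "similar_mat_wit B B' P Q"
  shows "similar_mat_wit (pencil l w E A B) (pencil l w E' A' B') P Q"
  unfolding pencil_def
  by (intro similar_mat_wit_minus similar_mat_wit_smult assms)

lemma nilpotent_mat_orbit_null_vectorE:
  fixes N :: "'a :: field mat"
  assumes N: "N \<in> carrier_mat k k" "nilpotent_mat N" and v: "v \<in> carrier_vec k" "v \<noteq> 0\<^sub>v k"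
  obtains j where "N ^\<^sub>m j *\<^sub>v v \<noteq> 0\<^sub>v k" "N *\<^sub>v (N ^\<^sub>m j *\<^sub>v v) = 0\<^sub>v k"
proof -
  obtain m where "N ^\<^sub>m m = 0\<^sub>m k k" using N by (auto simp: nilpotent_mat_iff)
  then have "N ^\<^sub>m m *\<^sub>v v = 0\<^sub>v k"
    using v by (intro eq_vecI) (auto simp: scalar_prod_def)
  define i where "i = (LEAST i. N ^\<^sub>m i *\<^sub>v v = 0\<^sub>v k)"
  have i: "N ^\<^sub>m i *\<^sub>v v = 0\<^sub>v k"
    unfolding i_def by (rule LeastI) fact
  have "N ^\<^sub>m 0 *\<^sub>v v = v" using N v by simp
  then have "i \<noteq> 0" using i v by auto
  then obtain j where j: "i = Suc j" using not0_implies_Suc by blast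
  have "N ^\<^sub>m j *\<^sub>v v \<noteq> 0\<^sub>v k"
    using not_less_Least[of j "\<lambda>i. N ^\<^sub>m i *\<^sub>v v = 0\<^sub>v k"] j unfolding i_def by auto
  moreover have "N *\<^sub>v (N ^\<^sub>m j *\<^sub>v v) = (N ^\<^sub>m j * N) *\<^sub>v v"
    using pow_mat_intertwine[of N k N k N j] assoc_mult_mat_vec[OF N(1) pow_carrier_mat[OF N(1)] v(1)] N(1)
    by simp
  then have "N *\<^sub>v (N ^\<^sub>m j *\<^sub>v v) = 0\<^sub>v k"
    using i unfolding j by simp
  ultimately show thesis by (rule that)
qed

lemma mult_mat_vec_zero: "A \<in> carrier_mat m n \<Longrightarrow> A *\<^sub>v 0\<^sub>v n = (0\<^sub>v m :: 'a :: semiring_0 vec)"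
  by (intro eq_vecI) (auto simp: scalar_prod_def)

lemma commuting_nilpotent_common_null_vector:
  fixes Ns :: "'a :: field mat list"
  assumes "\<forall>N \<in> set Ns. N \<in> carrier_mat k k \<and> nilpotent_mat N"
    and "\<forall>M \<in> set Ns. \<forall>N \<in> set Ns. M * N = N * M" and "0 < k"
  shows "\<exists>v \<in> carrier_vec k. v \<noteq> 0\<^sub>v k \<and> (\<forall>N \<in> set Ns. N *\<^sub>v v = 0\<^sub>v k)"
  using assms(1,2)
proof (induct Ns)
  case Nil
  show ?case using unit_vec_nonzero[OF assms(3)] unit_vec_carrier by auto
next
  case (Cons N Ns)
  then obtain v where v: "v \<in> carrier_vec k" "v \<noteq> 0\<^sub>v k" and Ns: "\<forall>M \<in> set Ns. M *\<^sub>v v = 0\<^sub>v k"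
    by auto
  have N: "N \<in> carrier_mat k k" "nilpotent_mat N" using Cons.prems(1) by auto
  obtain j where j: "N ^\<^sub>m j *\<^sub>v v \<noteq> 0\<^sub>v k" "N *\<^sub>v (N ^\<^sub>m j *\<^sub>v v) = 0\<^sub>v k"
    by (rule nilpotent_mat_orbit_null_vectorE[OF N v])
  have "M *\<^sub>v (N ^\<^sub>m j *\<^sub>v v) = 0\<^sub>v k" if M: "M \<in> set Ns" for M
  proof -
    have Mk: "M \<in> carrier_mat k k" using Cons.prems(1) M by simp
    have "N * M = M * N" using Cons.prems(2) M by (blast intro: list.set_intros)
    have "M *\<^sub>v (N ^\<^sub>m j *\<^sub>v v) = (M * N ^\<^sub>m j) *\<^sub>v v"
      by (rule assoc_mult_mat_vec[OF Mk pow_carrier_mat[OF N(1)] v(1), symmetric])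
    also have "\<dots> = (N ^\<^sub>m j * M) *\<^sub>v v"
      unfolding pow_mat_intertwine[OF N(1) N(1) Mk \<open>N * M = M * N\<close>] ..
    also have "\<dots> = N ^\<^sub>m j *\<^sub>v (M *\<^sub>v v)"
      by (rule assoc_mult_mat_vec[OF pow_carrier_mat[OF N(1)] Mk v(1)])
    also have "\<dots> = 0\<^sub>v k"
      using Ns M mult_mat_vec_zero[OF pow_carrier_mat[OF N(1)]] by simp
    finally show ?thesis .
  qed
  moreover have "N ^\<^sub>m j *\<^sub>v v \<in> carrier_vec k"
    by (rule mult_mat_vec_carrier[OF pow_carrier_mat[OF N(1)] v(1)])
  ultimately show ?case using j by auto
qed

text \<open>The common null vector lies in the kernel of every member of the pencil.\<close>

lemma det_pencil_commuting_nilpotent: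
  fixes E A B :: "'a :: field mat"
  assumes "E \<in> carrier_mat k k" "A \<in> carrier_mat k k" "B \<in> carrier_mat k k"
    and "nilpotent_mat E" "nilpotent_mat A" "nilpotent_mat B"
    and "E * A = A * E" "E * B = B * E" "A * B = B * A" and "0 < k"
  shows "det (pencil l w E A B) = 0"
proof -
  obtain v where v: "v \<in> carrier_vec k" "v \<noteq> 0\<^sub>v k"
    and "E *\<^sub>v v = 0\<^sub>v k" "A *\<^sub>v v = 0\<^sub>v k" "B *\<^sub>v v = 0\<^sub>v k"
    using commuting_nilpotent_common_null_vector[of "[E, A, B]" k] assms by auto
  then have "pencil l w E A B *\<^sub>v v = 0\<^sub>v k"
    using assms(1-3) by (intro eq_vecI) (auto simp: pencil_mult_mat_vec)
  then show ?thesis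
    using v det_0_iff_vec_prod_zero[OF pencil_carrier_mat[OF assms(1-3)]] by blast
qed

lemma not_regular_triple_nilpotent_block:
  assumes "similar_mat_wit E (block_diag2 E1 E2) P Q" "similar_mat_wit A (block_diag2 A1 A2) P Q"
    "similar_mat_wit B (block_diag2 B1 B2) P Q"
    and "E1 \<in> carrier_mat m m" "A1 \<in> carrier_mat m m" "B1 \<in> carrier_mat m m"
    and "E2 \<in> carrier_mat k k" "A2 \<in> carrier_mat k k" "B2 \<in> carrier_mat k k"
    and "nilpotent_mat E2" "nilpotent_mat A2" "nilpotent_mat B2"
    and "E2 * A2 = A2 * E2" "E2 * B2 = B2 * E2" "A2 * B2 = B2 * A2" and "0 < k"
  shows "\<not> regular_triple E A B"
proof -
  have "det (pencil l w E A B) = 0" for l w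
  proof -
    have "det (pencil l w E A B) = det (pencil l w (block_diag2 E1 E2) (block_diag2 A1 A2) (block_diag2 B1 B2))"
      using similar_mat_wit_pencil[OF assms(1-3)] by (intro det_similar) (auto simp: similar_mat_def)
    also have "\<dots> = det (pencil l w E1 A1 B1) * det (pencil l w E2 A2 B2)"
      using assms(4-9) by (simp add: pencil_block_diag2 det_block_diag2[of _ m _ k])
    also have "det (pencil l w E2 A2 B2) = 0"
      using assms(7-) by (rule det_pencil_commuting_nilpotent)
    finally show ?thesis by simp
  qed
  then show ?thesis unfolding regular_triple_iff_pencil by blast
qed

theorem theorem5:
  fixes E A B :: "complex mat" and n :: nat
  assumes "E \<in> carrier_mat n n" "A \<in> carrier_mat n n" "B \<in> carrier_mat n n"
    and "E * A = A * E" "E * B = B * E" "A * B = B * A"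
  shows "\<exists>U Uinv n1 n2 n3 n4 JE NE2 NE3 NE4 A1 JA NA3 NA4 B1 B2 JB NB4.
     U \<in> carrier_mat n n \<and> Uinv \<in> carrier_mat n n \<and>
     U * Uinv = 1\<^sub>m n \<and> Uinv * U = 1\<^sub>m n \<and>
     n1 + n2 + n3 + n4 = n \<and>
     JE \<in> carrier_mat n1 n1 \<and> NE2 \<in> carrier_mat n2 n2 \<and> NE3 \<in> carrier_mat n3 n3 \<and> NE4 \<in> carrier_mat n4 n4 \<and>
     A1 \<in> carrier_mat n1 n1 \<and> JA \<in> carrier_mat n2 n2 \<and> NA3 \<in> carrier_mat n3 n3 \<and> NA4 \<in> carrier_mat n4 n4 \<and>
     B1 \<in> carrier_mat n1 n1 \<and> B2 \<in> carrier_mat n2 n2 \<and> JB \<in> carrier_mat n3 n3 \<and> NB4 \<in> carrier_mat n4 n4 \<and>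
     U * E * Uinv = block_diag4 JE NE2 NE3 NE4 \<and>
     U * A * Uinv = block_diag4 A1 JA NA3 NA4 \<and>
     U * B * Uinv = block_diag4 B1 B2 JB NB4 \<and>
     invertible_mat JE \<and> invertible_mat JA \<and> invertible_mat JB \<and>
     nilpotent_mat NE2 \<and> nilpotent_mat NE3 \<and> nilpotent_mat NE4 \<and>
     nilpotent_mat NA3 \<and> nilpotent_mat NA4 \<and> nilpotent_mat NB4 \<and>
     (regular_triple E A B \<longrightarrow> n4 = 0)"
proof -
  obtain P Q n1 n2 n3 n4 JE NE2 NE3 NE4 A1 JA NA3 NA4 B1 B2 JB NB4 where
    sim: "similar_mat_wit E (block_diag4 JE NE2 NE3 NE4) P Q"
      "similar_mat_wit A (block_diag4 A1 JA NA3 NA4) P Q" "similar_mat_wit B (block_diag4 B1 B2 JB NB4) P Q"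
    and sizes: "n1 + n2 + n3 + n4 = n"
    and blocks: "JE \<in> carrier_mat n1 n1" "NE2 \<in> carrier_mat n2 n2" "NE3 \<in> carrier_mat n3 n3"
      "NE4 \<in> carrier_mat n4 n4" "A1 \<in> carrier_mat n1 n1" "JA \<in> carrier_mat n2 n2"
      "NA3 \<in> carrier_mat n3 n3" "NA4 \<in> carrier_mat n4 n4" "B1 \<in> carrier_mat n1 n1"
      "B2 \<in> carrier_mat n2 n2" "JB \<in> carrier_mat n3 n3" "NB4 \<in> carrier_mat n4 n4"
    and inv: "invertible_mat JE" "invertible_mat JA" "invertible_mat JB"
    and nilpotent: "nilpotent_mat NE2" "nilpotent_mat NE3" "nilpotent_mat NE4"
      "nilpotent_mat NA3" "nilpotent_mat NA4" "nilpotent_mat NB4"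
    and comm: "NE4 * NA4 = NA4 * NE4" "NE4 * NB4 = NB4 * NE4" "NA4 * NB4 = NB4 * NA4"
    by (rule commuting_triple_four_block_formE[OF assms])
  have regular: "regular_triple E A B \<Longrightarrow> n4 = 0"
    using not_regular_triple_nilpotent_block[OF sim[unfolded block_diag4_def block_diag2_assoc]
        _ _ _ blocks(4,8,12) nilpotent(3,5,6) comm] blocks
    by (metis block_diag2_carrier_mat gr0I)
  have conj: "Q * E * P = block_diag4 JE NE2 NE3 NE4" "Q * A * P = block_diag4 A1 JA NA3 NA4"
    "Q * B * P = block_diag4 B1 B2 JB NB4"
    using sim[THEN similar_mat_wit_sym, THEN similar_mat_witD(3)[OF refl]] by simp_all
  note inverse = similar_mat_witD2(1,2,6,7)[OF assms(1) sim(1)]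
  show ?thesis
    by (rule exI[of _ Q], rule exI[of _ P], rule exI[of _ n1], rule exI[of _ n2], rule exI[of _ n3],
        rule exI[of _ n4], rule exI[of _ JE], rule exI[of _ NE2], rule exI[of _ NE3], rule exI[of _ NE4],
        rule exI[of _ A1], rule exI[of _ JA], rule exI[of _ NA3], rule exI[of _ NA4], rule exI[of _ B1],
        rule exI[of _ B2], rule exI[of _ JB], rule exI[of _ NB4])
      (intro conjI impI; (rule inverse sizes blocks conj inv nilpotent | erule regular))
qed

end
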